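(* Let $B_i=(\underline{a}_i,\overline{a}_i)\times(\underline{b}_i,\overline{b}_i)\subset\mathbb{R}^2$, $i=1,\dots,N$, be rectangles and $d$ a positive integer, $p=\binom{d+2}{2}$. Let $$V(B_1,\dots,B_N)=\{f\in\mathbb{Z}[x,y]\mid \mathrm{Zero}(f)\cap B_i\neq\emptyset \text{ for all } i=1,\dots,N\},$$ where $\mathrm{Zero}(f)=\{(x,y)\in\mathbb{R}^2\mid f(x,y)=0\}$. Define the polynomial function $D_d:\mathbb{R}^{2N}\to\mathbb{R}$ by $$D_d(x_1,y_1,\dots,x_N,y_N)=\det\Big(\sum_{i=1}^N \mathbf{v}_d(x_i,y_i)\mathbf{v}_d(x_i,y_i)^T\Big),$$ where $\mathbf{v}_d$ is the vector of all $p$ monomials in $x,y$ of total degree at most $d$. If $D_d>0$ at every point of $B_1\times B_2\times\cdots\times B_N\subset\mathbb{R}^{2N}$, then $$\min\{\deg f\mid f\in V(B_1,\dots,B_N),\ f\neq 0\}\ge d+1.$$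
   Context: $\mathbf{v}_d=[1,x,y,x^2,xy,y^2,\dots,x^d,\dots,y^d]^T$ and $\mathbf{v}_d(x_i,y_i)$ is its evaluation at $(x_i,y_i)$. "Positive definite on the box" in the paper means strictly positive at every point of the box. *)

theory Defs
  imports Main "HOL-Library.Poly_Mapping" "Jordan_Normal_Form.Determinant"
begin

text \<open>Bivariate integer polynomials f in Z[x,y]: finitely supported coefficient maps,
  lookup f (i,j) is the coefficient of x^i y^j.\<close>
type_synonym bipoly = "(nat \<times> nat) \<Rightarrow>\<^sub>0 int"

definition bipoly_eval :: "bipoly \<Rightarrow> real \<Rightarrow> real \<Rightarrow> real" where
  "bipoly_eval f x y = (\<Sum>(i,j)\<in>Poly_Mapping.keys f. of_int (Poly_Mapping.lookup f (i,j)) * x ^ i * y ^ j)"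

text \<open>Total degree (only meaningful for f \<noteq> 0).\<close>
definition total_degree :: "bipoly \<Rightarrow> nat" where
  "total_degree f = Max ((\<lambda>(i,j). i + j) ` Poly_Mapping.keys f)"

definition Zero_set :: "bipoly \<Rightarrow> (real \<times> real) set" where
  "Zero_set f = {(x,y). bipoly_eval f x y = 0}"

definition rect :: "real \<Rightarrow> real \<Rightarrow> real \<Rightarrow> real \<Rightarrow> (real \<times> real) set" where
  "rect alo ahi blo bhi = {(x,y). alo < x \<and> x < ahi \<and> blo < y \<and> y < bhi}"

text \<open>Exponents of the monomials of v_d in the order 1, x, y, x^2, xy, y^2, ..., x^d, ..., y^d.\<close>
definition mono_list :: "nat \<Rightarrow> (nat \<times> nat) list" where
  "mono_list d = concat (map (\<lambda>k. map (\<lambda>i. (i, k - i)) (rev [0..<Suc k])) [0..<Suc d])"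

definition vd :: "nat \<Rightarrow> real \<Rightarrow> real \<Rightarrow> real vec" where
  "vd d x y = vec (length (mono_list d)) (\<lambda>r. x ^ fst (mono_list d ! r) * y ^ snd (mono_list d ! r))"

definition Dd :: "nat \<Rightarrow> nat \<Rightarrow> (nat \<Rightarrow> real) \<Rightarrow> (nat \<Rightarrow> real) \<Rightarrow> real" where
  "Dd d N xs ys = det (mat (length (mono_list d)) (length (mono_list d))
      (\<lambda>(r,c). \<Sum>i<N. (vd d (xs i) (ys i)) $ r * (vd d (xs i) (ys i)) $ c))"

end

theory Submission
  imports Defs
begin

text \<open>A nonzero f of total degree at most d is a nonzero linear functional c on the monomial
  vector: f(x,y) = v_d(x,y) \<bullet> c. If f vanishes at points (x_i,y_i), one from each rectangle,
  then c is orthogonal to every v_d(x_i,y_i), hence lies in the kernel of the Gram matrix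
  \<Sum>_i v_d(x_i,y_i) v_d(x_i,y_i)^T, so D_d vanishes at a point of the box.\<close>

lemma mono_list_Suc:
  "mono_list (Suc d) = mono_list d @ map (\<lambda>i. (i, Suc d - i)) (rev [0..<Suc (Suc d)])"
  unfolding mono_list_def by simp

lemma set_mono_list: "set (mono_list d) = {(i, j). i + j \<le> d}"
proof (induction d)
  case 0
  then show ?case by (auto simp: mono_list_def)
next
  case (Suc d)
  show ?case
  proof (rule Set.set_eqI)
    fix z :: "nat \<times> nat"
    obtain a b where z: "z = (a, b)" by force
    show "z \<in> set (mono_list (Suc d)) \<longleftrightarrow> z \<in> {(i, j). i + j \<le> Suc d}"
      unfolding mono_list_Suc z using Suc by (cases "a + b = Suc d") auto
  qed
qed

lemma distinct_mono_list: "distinct (mono_list d)"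
proof (induction d)
  case 0
  then show ?case by (simp add: mono_list_def)
next
  case (Suc d)
  let ?top = "map (\<lambda>i. (i, Suc d - i)) (rev [0..<Suc (Suc d)])"
  have "inj_on (\<lambda>i. (i, Suc d - i)) (set (rev [0..<Suc (Suc d)]))"
    by (auto simp: inj_on_def)
  then have "distinct ?top"
    by (simp add: distinct_map)
  moreover have "set (mono_list d) \<inter> set ?top = {}"
    by (auto simp: set_mono_list)
  ultimately show ?case using Suc unfolding mono_list_Suc by simp
qed

lemma keys_subset_mono_list:
  assumes "total_degree f \<le> d"
  shows "Poly_Mapping.keys f \<subseteq> set (mono_list d)"
proof
  fix k assume k: "k \<in> Poly_Mapping.keys f"
  obtain i j where kij: "k = (i, j)" by force
  have "i + j \<le> total_degree f"
    unfolding total_degree_def using k kij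
    by (metis (mono_tags, lifting) Max_ge case_prod_conv finite_imageI finite_keys image_eqI)
  then show "k \<in> set (mono_list d)" using assms kij by (simp add: set_mono_list)
qed

definition coeff_vec :: "nat \<Rightarrow> bipoly \<Rightarrow> real vec" where
  "coeff_vec d f = vec (length (mono_list d)) (\<lambda>r. of_int (Poly_Mapping.lookup f (mono_list d ! r)))"

lemma coeff_vec_carrier: "coeff_vec d f \<in> carrier_vec (length (mono_list d))"
  by (simp add: coeff_vec_def)

lemma bipoly_eval_eq_scalar_prod:
  assumes "total_degree f \<le> d"
  shows "bipoly_eval f x y = vd d x y \<bullet> coeff_vec d f"
proof -
  let ?L = "mono_list d"
  let ?term = "\<lambda>k. of_int (Poly_Mapping.lookup f k) * x ^ fst k * y ^ snd k"
  have "bipoly_eval f x y = (\<Sum>k\<in>Poly_Mapping.keys f. ?term k)"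
    unfolding bipoly_eval_def by (simp add: case_prod_beta)
  also have "\<dots> = (\<Sum>k\<in>set ?L. ?term k)"
    by (rule sum.mono_neutral_left)
      (use keys_subset_mono_list[OF assms] in \<open>auto simp: in_keys_iff\<close>)
  also have "\<dots> = (\<Sum>r<length ?L. ?term (?L ! r))"
    by (simp add: sum.distinct_set_conv_list[OF distinct_mono_list] sum_list_sum_nth
        lessThan_atLeast0)
  also have "\<dots> = vd d x y \<bullet> coeff_vec d f"
    by (auto simp: scalar_prod_def vd_def coeff_vec_def lessThan_atLeast0 intro: sum.cong)
  finally show ?thesis .
qed

lemma coeff_vec_nonzero:
  assumes "total_degree f \<le> d" and "f \<noteq> 0"
  shows "coeff_vec d f \<noteq> 0\<^sub>v (length (mono_list d))"
proof
  assume zero: "coeff_vec d f = 0\<^sub>v (length (mono_list d))"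
  obtain k where k: "k \<in> Poly_Mapping.keys f"
    using assms(2) by (metis all_not_in_conv keys_eq_empty)
  then obtain r where r: "r < length (mono_list d)" "mono_list d ! r = k"
    using keys_subset_mono_list[OF assms(1)] by (metis in_set_conv_nth subsetD)
  have "of_int (Poly_Mapping.lookup f k) = (coeff_vec d f $ r :: real)"
    using r by (simp add: coeff_vec_def)
  also have "\<dots> = 0" using zero r by simp
  finally show False using k by (simp add: in_keys_iff)
qed

lemma sum_outer_mult_vec_orthogonal:
  fixes v :: "nat \<Rightarrow> 'a :: comm_semiring_0 vec"
  assumes "c \<in> carrier_vec n" and "\<forall>i<N. v i \<bullet> c = 0"
  shows "mat n n (\<lambda>(r, s). \<Sum>i<N. v i $ r * v i $ s) *\<^sub>v c = 0\<^sub>v n"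
proof (rule eq_vecI)
  fix r assume "r < dim_vec (0\<^sub>v n :: 'a vec)"
  then have r: "r < n" by simp
  have "(mat n n (\<lambda>(r, s). \<Sum>i<N. v i $ r * v i $ s) *\<^sub>v c) $ r
      = (\<Sum>s<n. (\<Sum>i<N. v i $ r * v i $ s) * c $ s)"
    using r assms(1) by (simp add: mult_mat_vec_def scalar_prod_def lessThan_atLeast0)
  also have "\<dots> = (\<Sum>i<N. v i $ r * (v i \<bullet> c))"
    using assms(1)
    by (simp add: scalar_prod_def atLeast0LessThan sum_distrib_left sum_distrib_right
        mult.assoc sum.swap[of _ "{..<N}"])
  also have "\<dots> = 0" using assms(2) by simp
  finally show "(mat n n (\<lambda>(r, s). \<Sum>i<N. v i $ r * v i $ s) *\<^sub>v c) $ r = 0\<^sub>v n $ r"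
    using r by simp
qed simp

lemma det_sum_outer_eq_0_if_orthogonal:
  fixes v :: "nat \<Rightarrow> 'a :: idom vec"
  assumes "c \<in> carrier_vec n" and "c \<noteq> 0\<^sub>v n" and "\<forall>i<N. v i \<bullet> c = 0"
  shows "det (mat n n (\<lambda>(r, s). \<Sum>i<N. v i $ r * v i $ s)) = 0"
proof -
  have "mat n n (\<lambda>(r, s). \<Sum>i<N. v i $ r * v i $ s) \<in> carrier_mat n n" by simp
  then show ?thesis
    using det_0_iff_vec_prod_zero sum_outer_mult_vec_orthogonal[OF assms(1,3)] assms(1,2)
    by blast
qed

theorem corollary3:
  fixes N d :: nat
    and alo ahi blo bhi :: "nat \<Rightarrow> real"
  assumes "d \<ge> 1"
    and "\<forall>xs ys. (\<forall>i<N. (xs i, ys i) \<in> rect (alo i) (ahi i) (blo i) (bhi i))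
                  \<longrightarrow> Dd d N xs ys > 0"
  shows "\<forall>f :: bipoly. f \<noteq> 0 \<and> (\<forall>i<N. Zero_set f \<inter> rect (alo i) (ahi i) (blo i) (bhi i) \<noteq> {})
            \<longrightarrow> total_degree f \<ge> d + 1"
proof (intro allI impI, rule ccontr)
  fix f :: bipoly
  assume f: "f \<noteq> 0 \<and> (\<forall>i<N. Zero_set f \<inter> rect (alo i) (ahi i) (blo i) (bhi i) \<noteq> {})"
  assume "\<not> d + 1 \<le> total_degree f"
  then have deg: "total_degree f \<le> d" by simp
  obtain xs ys where pts:
    "\<And>i. i < N \<Longrightarrow> (xs i, ys i) \<in> Zero_set f \<inter> rect (alo i) (ahi i) (blo i) (bhi i)"
  proof -
    have "\<forall>i. \<exists>p. i < N \<longrightarrow> p \<in> Zero_set f \<inter> rect (alo i) (ahi i) (blo i) (bhi i)"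
      using f by blast
    then obtain q where "\<And>i. i < N \<Longrightarrow> q i \<in> Zero_set f \<inter> rect (alo i) (ahi i) (blo i) (bhi i)"
      by metis
    then show ?thesis using that[of "\<lambda>i. fst (q i)" "\<lambda>i. snd (q i)"] by simp
  qed
  then have orth: "\<forall>i<N. vd d (xs i) (ys i) \<bullet> coeff_vec d f = 0"
    by (simp add: Zero_set_def bipoly_eval_eq_scalar_prod[OF deg])
  have "Dd d N xs ys = 0"
    unfolding Dd_def
    using det_sum_outer_eq_0_if_orthogonal[OF coeff_vec_carrier
        coeff_vec_nonzero[OF deg f[THEN conjunct1]] orth] .
  moreover have "Dd d N xs ys > 0"
    using assms(2) pts by blast
  ultimately show False by simp
qed

end
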